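(* Let $(E,d)$ be a metric space with a Borel probability measure $\mu$, let $k\geq1$ and $\alpha_k:[0,\infty)\to[0,\infty)$, and assume $(E,d,\mu)$ satisfies the multi-set concentration of measure property of order $k$ with concentration profile $\alpha_k$. Let $f:E\to\mathbb{R}$ be $1$-Lipschitz, and let $A_1,\ldots,A_k$ be Borel subsets of $E$ with $(\mu(A_1),\ldots,\mu(A_k))\in\Delta_k$; set $A=A_1\cup\cdots\cup A_k$. Then for any $1$-Lipschitz function $g:E\to\mathbb{R}$ with $g=f$ on $A$, \[ \mu(|f-g|\geq r)\leq(1-\mu(A))\,\alpha_k(r/2),\qquad\forall\,0<r\leq\min_{i\neq j}d(A_i,A_j). \]
   Context: For $A,B\subset E$, $d(A,B)=\inf\{d(x,y):x\in A,y\in B\}$ and for $r>0$, $A_r=\{x\in E:\exists y\in A,\ d(x,y)<r\}$. $\Delta_k$ is the set of $(a_1,\ldots,a_k)\in[0,1]^k$ with $\sum_ja_j\leq1$ and $a_i+\sum_ja_j\geq1$ for every $i$. $(E,d,\mu)$ satisfies the multi-set concentration of measure property of order $k$ with profile $\alpha_k$ if for all Borel sets $A_1,\ldots,A_k\subset E$ with $(\mu(A_1),\ldots,\mu(A_k))\in\Delta_k$, the set $A=A_1\cup\cdots\cup A_k$ satisfies $\mu(A_r)\geq1-(1-\mu(A))\alpha_k(r)$ for all $0<r\leq\frac12\min_{i\neq j}d(A_i,A_j)$. *)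

theory Defs
  imports "HOL-Probability.Probability"
begin

text \<open>Distance between two sets, d(A,B) = inf of d(x,y); value in ereal, so the
  infimum over an empty set is +infinity.\<close>
definition set_dist :: "'a::metric_space set \<Rightarrow> 'a set \<Rightarrow> ereal" where
  "set_dist A B = Inf {ereal (dist x y) | x y. x \<in> A \<and> y \<in> B}"

text \<open>min over i \<noteq> j (indices 0..k-1) of d(A_i,A_j); +infinity if there are no such pairs.\<close>
definition min_sep :: "nat \<Rightarrow> (nat \<Rightarrow> 'a::metric_space set) \<Rightarrow> ereal" where
  "min_sep k A = Inf {set_dist (A i) (A j) | i j. i < k \<and> j < k \<and> i \<noteq> j}"

definition enlarge :: "'a::metric_space set \<Rightarrow> real \<Rightarrow> 'a set" where
  "enlarge A r = {x. \<exists>y\<in>A. dist x y < r}"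

definition in_Delta :: "nat \<Rightarrow> (nat \<Rightarrow> real) \<Rightarrow> bool" where
  "in_Delta k a \<longleftrightarrow> (\<forall>i<k. 0 \<le> a i \<and> a i \<le> 1) \<and> (\<Sum>j<k. a j) \<le> 1
      \<and> (\<forall>i<k. a i + (\<Sum>j<k. a j) \<ge> 1)"

definition multiset_concentration ::
    "'a::metric_space measure \<Rightarrow> nat \<Rightarrow> (real \<Rightarrow> real) \<Rightarrow> bool" where
  "multiset_concentration M k \<alpha> \<longleftrightarrow>
     (\<forall>A::nat \<Rightarrow> 'a set. (\<forall>i<k. A i \<in> sets M) \<and> in_Delta k (\<lambda>i. measure M (A i)) \<longrightarrow>
        (\<forall>r>0. ereal r \<le> min_sep k A / 2 \<longrightarrow>
           measure M (enlarge (\<Union>i<k. A i) r)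
             \<ge> 1 - (1 - measure M (\<Union>i<k. A i)) * \<alpha> r))"

end

theory Submission
  imports Defs
begin

text \<open>Two 1-Lipschitz functions that agree on the union \<open>A\<close> differ by less than \<open>r\<close> on its
  \<open>r/2\<close>-enlargement, so \<open>{|f - g| \<ge> r}\<close> lies in the complement of \<open>A\<^sub>r\<^sub>/\<^sub>2\<close>. Since \<open>r \<le> min d(A\<^sub>i, A\<^sub>j)\<close>,
  the concentration property applies at radius \<open>r/2\<close> and bounds the measure of that complement.\<close>

lemma enlarge_eq_UN_ball: "enlarge S r = (\<Union>y\<in>S. ball y r)"
  unfolding enlarge_def by (auto simp: dist_commute)

lemma open_enlarge: "open (enlarge S r)"
  by (auto simp: enlarge_eq_UN_ball)

lemma lipschitz_agree_dist_lt:
  fixes f g :: "'a::metric_space \<Rightarrow> real"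
  assumes "1-lipschitz_on UNIV f" "1-lipschitz_on UNIV g"
    and "\<forall>y\<in>S. g y = f y" and "x \<in> enlarge S \<rho>"
  shows "\<bar>f x - g x\<bar> < 2 * \<rho>"
proof -
  obtain y where y: "y \<in> S" "dist x y < \<rho>"
    using assms(4) unfolding enlarge_def by auto
  have "\<bar>f x - f y\<bar> \<le> dist x y" "\<bar>g x - g y\<bar> \<le> dist x y"
    using lipschitz_onD[OF assms(1), of x y] lipschitz_onD[OF assms(2), of x y]
    by (simp_all add: dist_real_def)
  with y assms(3) show ?thesis by fastforce
qed

lemma ereal_half_le_half: "ereal r \<le> m \<Longrightarrow> ereal (r / 2) \<le> m / 2"
  using ereal_divide_right_mono[of "ereal r" m 2] by simp

theorem proposition4p3:
  fixes M :: "'a::metric_space measure" and k :: nat and \<alpha> :: "real \<Rightarrow> real"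
    and f g :: "'a \<Rightarrow> real" and A :: "nat \<Rightarrow> 'a set"
  assumes "prob_space M" and "sets M = sets borel"
    and "k \<ge> 1"
    and "\<forall>r\<ge>0. \<alpha> r \<ge> 0"
    and "multiset_concentration M k \<alpha>"
    and "1-lipschitz_on UNIV f"
    and "\<forall>i<k. A i \<in> sets borel"
    and "in_Delta k (\<lambda>i. measure M (A i))"
    and "1-lipschitz_on UNIV g"
    and "\<forall>x\<in>(\<Union>i<k. A i). g x = f x"
  shows "\<forall>r>0. ereal r \<le> min_sep k A \<longrightarrow>
           measure M {x. \<bar>f x - g x\<bar> \<ge> r} \<le> (1 - measure M (\<Union>i<k. A i)) * \<alpha> (r / 2)"
proof (intro allI impI)
  fix r :: real assume r: "r > 0" "ereal r \<le> min_sep k A"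
  interpret prob_space M by fact
  define E where "E = enlarge (\<Union>i<k. A i) (r / 2)"
  have E_sets: "E \<in> sets M"
    unfolding E_def using assms(2) borel_open[OF open_enlarge] by simp
  have concentration: "1 - (1 - measure M (\<Union>i<k. A i)) * \<alpha> (r / 2) \<le> measure M E"
    using assms(2,5,7,8) r ereal_half_le_half[OF r(2)]
    unfolding multiset_concentration_def E_def by auto
  have "{x. \<bar>f x - g x\<bar> \<ge> r} \<subseteq> space M - E"
    using lipschitz_agree_dist_lt[OF assms(6,9,10), of _ "r / 2"]
      sets_eq_imp_space_eq[OF assms(2)] by (fastforce simp: E_def)
  then have "measure M {x. \<bar>f x - g x\<bar> \<ge> r} \<le> measure M (space M - E)"
    using E_sets by (intro finite_measure_mono) auto
  also have "\<dots> = 1 - measure M E"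
    using prob_compl[OF E_sets] by simp
  finally show "measure M {x. \<bar>f x - g x\<bar> \<ge> r} \<le> (1 - measure M (\<Union>i<k. A i)) * \<alpha> (r / 2)"
    using concentration by linarith
qed

end
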